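(* Let $n=2^m m'$, where $m\in\mathbb{N}=\{0,1,2,\dots\}$ and $m'$ is a positive odd integer, and let $m'=p_1^{\alpha_1}p_2^{\alpha_2}\cdots p_k^{\alpha_k}$ be the prime factorization of $m'$. Then the subgroup commutativity degree of the dicyclic group $Dic_{4n}$ is $$sd(Dic_{4n})=\frac{(m+2)^2\tau(m')^2+2(m+2)\tau(m')\sigma(n)+[(m-1)2^{m+3}+9]\,g(m')}{[(m+2)\tau(m')+\sigma(n)]^2},$$ where $$g(m')=\prod_{i=1}^k\frac{(2\alpha_i+1)p_i^{\alpha_i+2}-(2\alpha_i+3)p_i^{\alpha_i+1}+p_i+1}{(p_i-1)^2}$$ (an empty product, i.e. $m'=1$, being equal to $1$).
   Context: For a finite group $G$, $L(G)$ denotes the set of all subgroups of $G$, and the subgroup commutativity degree is $sd(G)=\frac{1}{|L(G)|^2}\,\bigl|\{(H,K)\in L(G)^2 : HK=KH\}\bigr|$. For a positive integer $n$, $\tau(n)$ is the number of positive divisors of $n$ and $\sigma(n)$ is their sum. The dicyclic group of order $4n$ ($n\geq 1$) is $Dic_{4n}=\langle a,\gamma \mid a^{2n}=e,\ \gamma^2=a^n,\ \gamma^{-1}a\gamma=a^{-1}\rangle$. *)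

theory Defs
  imports "HOL-Algebra.Algebra" "HOL-Computational_Algebra.Primes" Complex_Main
begin

text \<open>Dicyclic group of order 4n, concretely: the pair (i, b) stands for a^i gamma^b
  with 0 <= i < 2n.  Multiplication uses gamma a^j = a^(-j) gamma and gamma^2 = a^n.\<close>
definition Dic :: "nat \<Rightarrow> (nat \<times> bool) monoid" where
  "Dic n = \<lparr> carrier = {0..<2*n} \<times> UNIV,
             monoid.mult = (\<lambda>(i,b) (j,c). ((i + (if b then 2*n - j else j) + (if b \<and> c then n else 0)) mod (2*n),
                                    b \<noteq> c)),
             one = (0, False) \<rparr>"

definition subgroups :: "('a, 'b) monoid_scheme \<Rightarrow> 'a set set" where
  "subgroups G = {H. subgroup H G}"

definition sd :: "('a, 'b) monoid_scheme \<Rightarrow> real" where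
  "sd G = real (card {(H, K). H \<in> subgroups G \<and> K \<in> subgroups G \<and> H <#>\<^bsub>G\<^esub> K = K <#>\<^bsub>G\<^esub> H})
          / real (card (subgroups G))^2"

definition tau :: "nat \<Rightarrow> nat" where
  "tau n = card {d. d dvd n}"

definition sigma :: "nat \<Rightarrow> nat" where
  "sigma n = (\<Sum>d\<in>{d. d dvd n}. d)"

definition gfun :: "nat \<Rightarrow> real" where
  "gfun m' = (\<Prod>p\<in>prime_factors m'.
      let a = multiplicity p m'; q = real p in
      ((2 * real a + 1) * q ^ (a+2) - (2 * real a + 3) * q ^ (a+1) + q + 1) / (q - 1)^2)"

end

theory Submission
  imports Defs
begin

text \<open>
  Every subgroup of Dic_{4n} is either a subgroup of the cyclic group generated by a, i.e.
  generated by a^d for some d dividing 2n, or is generated by a^d and a^r \<gamma> with d dividing n and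
  0 \<le> r < d; this gives \<tau>(2n) + \<sigma>(n) subgroups. Subgroups of the first kind are normal and
  hence permute with every subgroup. Two subgroups of the second kind permute iff
  gcd(d1, d2) divides 2(r1 - r2), and for fixed d1, d2 there are lcm(d1, d2) such pairs (r1, r2),
  twice as many when d1 and d2 are both even. Summing over pairs of divisors of n gives a
  multiplicative function of n; it factors into its values at 2^m and at the prime powers
  dividing m', where it is evaluated in closed form.
\<close>

section \<open>Divisor sums\<close>

definition lcm_sum :: "nat \<Rightarrow> nat" where
  "lcm_sum n = (\<Sum>a | a dvd n. \<Sum>b | b dvd n. lcm a b)"

definition even_weighted_lcm_sum :: "nat \<Rightarrow> nat" where
  "even_weighted_lcm_sum n = (\<Sum>a | a dvd n. \<Sum>b | b dvd n. (if even a \<and> even b then 2 else 1) * lcm a b)"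

lemma bij_betw_mult_divisors:
  fixes u v :: nat
  assumes "coprime u v" "0 < u"
  shows "bij_betw (\<lambda>(x, y). x * y) ({x. x dvd u} \<times> {y. y dvd v}) {d. d dvd u * v}"
proof (rule bij_betwI')
  fix p q assume "p \<in> {x. x dvd u} \<times> {y. y dvd v}" "q \<in> {x. x dvd u} \<times> {y. y dvd v}"
  then obtain x1 y1 x2 y2 where pq: "p = (x1, y1)" "q = (x2, y2)"
    and dvd: "x1 dvd u" "y1 dvd v" "x2 dvd u" "y2 dvd v" by auto
  show "(\<lambda>(x, y). x * y) p = (\<lambda>(x, y). x * y) q \<longleftrightarrow> p = q"
  proof
    assume "(\<lambda>(x, y). x * y) p = (\<lambda>(x, y). x * y) q"
    then have eq: "x1 * y1 = x2 * y2" using pq by simp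
    have "coprime x1 y2" "coprime x2 y1" using dvd assms(1) by (auto intro: coprime_divisors)
    then have "x1 dvd x2" "x2 dvd x1" using eq
      by (metis coprime_dvd_mult_left_iff dvd_triv_left)+
    then have "x1 = x2" by (rule dvd_antisym)
    moreover have "0 < x1" using dvd(1) assms(2) by (auto intro: Nat.gr0I)
    ultimately show "p = q" using eq pq by simp
  qed simp
next
  fix p assume "p \<in> {x. x dvd u} \<times> {y. y dvd v}"
  then show "(\<lambda>(x, y). x * y) p \<in> {d. d dvd u * v}" by (auto intro: mult_dvd_mono)
next
  fix d assume "d \<in> {d. d dvd u * v}"
  then obtain x y where "d = x * y" "x dvd u" "y dvd v" using division_decomp by blast
  then show "\<exists>p \<in> {x. x dvd u} \<times> {y. y dvd v}. d = (\<lambda>(x, y). x * y) p" by auto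
qed

lemma double_divisor_sum_mult:
  fixes F :: "nat \<Rightarrow> nat \<Rightarrow> 'a::comm_semiring_1" and u v :: nat
  assumes cop: "coprime u v" and "0 < u" "0 < v"
    and F: "\<And>x1 x2 y1 y2. x1 dvd u \<Longrightarrow> x2 dvd u \<Longrightarrow> y1 dvd v \<Longrightarrow> y2 dvd v \<Longrightarrow>
         F (x1 * y1) (x2 * y2) = F1 x1 x2 * F2 y1 y2"
  shows "(\<Sum>a | a dvd u * v. \<Sum>b | b dvd u * v. F a b)
       = (\<Sum>a | a dvd u. \<Sum>b | b dvd u. F1 a b) * (\<Sum>a | a dvd v. \<Sum>b | b dvd v. F2 a b)"
proof -
  let ?U = "{x. x dvd u}" and ?V = "{y. y dvd v}"
  have reindex: "(\<Sum>d | d dvd u * v. f d) = (\<Sum>(x, y) \<in> ?U \<times> ?V. f (x * y))" for f :: "nat \<Rightarrow> 'a"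
    using sum.reindex_bij_betw[OF bij_betw_mult_divisors[OF assms(1,2)], of f] by (simp add: case_prod_beta')
  have product_sum: "(\<Sum>(x, y) \<in> A \<times> B. f x * g y) = sum f A * sum g B"
    for A B and f g :: "nat \<Rightarrow> 'a"
    by (simp add: sum_product sum.cartesian_product)
  have "(\<Sum>a | a dvd u * v. \<Sum>b | b dvd u * v. F a b)
      = (\<Sum>(x1, y1) \<in> ?U \<times> ?V. \<Sum>(x2, y2) \<in> ?U \<times> ?V. F1 x1 x2 * F2 y1 y2)"
    unfolding reindex by (auto simp: F intro!: sum.cong)
  also have "\<dots> = (\<Sum>(x1, y1) \<in> ?U \<times> ?V. (\<Sum>x2\<in>?U. F1 x1 x2) * (\<Sum>y2\<in>?V. F2 y1 y2))"
    by (simp add: product_sum)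
  also have "\<dots> = (\<Sum>a\<in>?U. \<Sum>b\<in>?U. F1 a b) * (\<Sum>a\<in>?V. \<Sum>b\<in>?V. F2 a b)"
    by (simp add: product_sum)
  finally show ?thesis .
qed

lemma lcm_mult_coprime_divisors:
  fixes u v x1 x2 y1 y2 :: nat
  assumes "coprime u v" "x1 dvd u" "x2 dvd u" "y1 dvd v" "y2 dvd v"
  shows "lcm (x1 * y1) (x2 * y2) = lcm x1 x2 * lcm y1 y2"
proof (rule dvd_antisym)
  show "lcm (x1 * y1) (x2 * y2) dvd lcm x1 x2 * lcm y1 y2"
    by (intro lcm_least mult_dvd_mono) simp_all
  have "coprime (lcm x1 x2) (lcm y1 y2)"
    using assms by (intro coprime_divisors[OF _ _ assms(1)]) (simp_all add: lcm_least)
  moreover have "lcm x1 x2 dvd lcm (x1 * y1) (x2 * y2)" "lcm y1 y2 dvd lcm (x1 * y1) (x2 * y2)"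
    by (intro lcm_least; meson dvd_lcm1 dvd_lcm2 dvd_mult_left dvd_mult_right dvd_trans)+
  ultimately show "lcm x1 x2 * lcm y1 y2 dvd lcm (x1 * y1) (x2 * y2)" by (simp add: divides_mult)
qed

lemma tau_mult: "coprime u v \<Longrightarrow> 0 < u \<Longrightarrow> tau (u * v) = tau u * tau v"
  unfolding tau_def by (simp add: bij_betw_same_card[OF bij_betw_mult_divisors, symmetric] card_cartesian_product)

lemma lcm_sum_mult:
  "coprime u v \<Longrightarrow> 0 < u \<Longrightarrow> 0 < v \<Longrightarrow> lcm_sum (u * v) = lcm_sum u * lcm_sum v"
  unfolding lcm_sum_def by (rule double_divisor_sum_mult) (auto intro: lcm_mult_coprime_divisors)

lemma even_weighted_lcm_sum_mult_odd:
  assumes "coprime u v" "0 < u" "0 < v" "odd v"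
  shows "even_weighted_lcm_sum (u * v) = even_weighted_lcm_sum u * lcm_sum v"
  unfolding even_weighted_lcm_sum_def lcm_sum_def
proof (rule double_divisor_sum_mult[OF assms(1-3)])
  fix x1 x2 y1 y2 assume xy: "x1 dvd u" "x2 dvd u" "y1 dvd v" "y2 dvd v"
  then have "odd y1" "odd y2" using assms(4) by (meson dvd_trans)+
  then show "(if even (x1 * y1) \<and> even (x2 * y2) then 2 else 1) * lcm (x1 * y1) (x2 * y2)
      = (if even x1 \<and> even x2 then 2 else 1) * lcm x1 x2 * lcm y1 y2"
    by (simp add: lcm_mult_coprime_divisors[OF assms(1) xy])
qed

lemma sum_divisors_prime_power:
  fixes p :: nat
  assumes "Factorial_Ring.prime p"
  shows "(\<Sum>a | a dvd p ^ k. f a) = (\<Sum>i\<le>k. f (p ^ i))"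
proof -
  have "{a. a dvd p ^ k} = (\<lambda>i. p ^ i) ` {..k}" using divides_primepow_nat[OF assms] by auto
  moreover have "inj_on (\<lambda>i. p ^ i) {..k}"
    using prime_gt_1_nat[OF assms] by (auto simp: inj_on_def)
  ultimately show ?thesis by (simp add: sum.reindex)
qed

lemma tau_prime_power: "Factorial_Ring.prime p \<Longrightarrow> tau (p ^ k) = Suc k"
  unfolding tau_def using sum_divisors_prime_power[where f = "\<lambda>_. 1::nat" and k = k] by simp

lemma lcm_power_power: "lcm ((p::nat) ^ i) (p ^ j) = p ^ max i j"
  by (cases "i \<le> j") (simp_all add: le_imp_power_dvd max_def)

lemma double_sum_atMost_Suc:
  "(\<Sum>i\<le>Suc k. \<Sum>j\<le>Suc k. f i j)
   = (\<Sum>i\<le>k. \<Sum>j\<le>k. f i j) + (\<Sum>i\<le>k. f i (Suc k)) + (\<Sum>j\<le>Suc k. f (Suc k) j)"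
  by (simp add: sum.distrib add_ac)

lemma double_sum_power_max:
  fixes q :: real
  assumes "q \<noteq> 1"
  shows "(\<Sum>i\<le>k. \<Sum>j\<le>k. q ^ max i j)
       = ((2 * k + 1) * q ^ (k + 2) - (2 * k + 3) * q ^ (k + 1) + q + 1) / (q - 1)\<^sup>2"
proof (induction k)
  case 0
  have "(q - 1)\<^sup>2 \<noteq> 0" using assms by simp
  then show ?case by (simp add: field_simps power2_eq_square)
next
  case (Suc k)
  have "(\<Sum>i\<le>k. q ^ max i (Suc k)) = (k + 1) * q ^ Suc k"
    by (simp add: max_def)
  moreover have "(\<Sum>j\<le>Suc k. q ^ max (Suc k) j) = (k + 2) * q ^ Suc k"
    by (simp add: max_def)
  moreover have "(q - 1)\<^sup>2 \<noteq> 0" using assms by simp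
  ultimately show ?case
    unfolding double_sum_atMost_Suc Suc by (simp add: field_simps power2_eq_square)
qed

lemma double_sum_weighted_two_power_max:
  "(\<Sum>i\<le>k. \<Sum>j\<le>k. (if 0 < i \<and> 0 < j then 2 else 1) * (2::real) ^ max i j) = (real k - 1) * 2 ^ (k + 3) + 9"
proof (induction k)
  case (Suc k)
  have weights: "(\<Sum>i\<le>m. if 0 < i then 2 else 1 :: real) = 2 * real m + 1" for m
    by (induction m) auto
  have "(\<Sum>i\<le>k. (if 0 < i \<and> 0 < Suc k then 2 else 1) * (2::real) ^ max i (Suc k))
      = (\<Sum>i\<le>k. if 0 < i then 2 else 1) * 2 ^ Suc k"
    by (simp add: max_def sum_distrib_right)
  moreover have "(\<Sum>j\<le>Suc k. (if 0 < Suc k \<and> 0 < j then 2 else 1) * (2::real) ^ max (Suc k) j)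
      = (\<Sum>j\<le>Suc k. if 0 < j then 2 else 1) * 2 ^ Suc k"
    unfolding sum_distrib_right by (intro sum.cong refl) (simp add: max_def)
  ultimately show ?case unfolding double_sum_atMost_Suc Suc weights by (simp add: field_simps power_add)
qed simp

lemma lcm_sum_prime_power:
  assumes "Factorial_Ring.prime p"
  shows "real (lcm_sum (p ^ k))
       = ((2 * real k + 1) * real p ^ (k + 2) - (2 * real k + 3) * real p ^ (k + 1) + real p + 1) / (real p - 1)\<^sup>2"
proof -
  have "real (lcm_sum (p ^ k)) = (\<Sum>i\<le>k. \<Sum>j\<le>k. real p ^ max i j)"
    unfolding lcm_sum_def by (simp add: sum_divisors_prime_power[OF assms] lcm_power_power)
  also have "\<dots> = ((2 * real k + 1) * real p ^ (k + 2) - (2 * real k + 3) * real p ^ (k + 1) + real p + 1) / (real p - 1)\<^sup>2"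
    using prime_gt_1_nat[OF assms] by (intro double_sum_power_max) simp
  finally show ?thesis .
qed

lemma even_weighted_lcm_sum_two_power:
  "real (even_weighted_lcm_sum (2 ^ k)) = (real k - 1) * 2 ^ (k + 3) + 9"
proof -
  have "real (even_weighted_lcm_sum (2 ^ k))
      = (\<Sum>i\<le>k. \<Sum>j\<le>k. (if 0 < i \<and> 0 < j then 2 else 1) * (2::real) ^ max i j)"
    unfolding even_weighted_lcm_sum_def sum_divisors_prime_power[OF two_is_prime_nat] of_nat_sum
    by (intro sum.cong refl) (simp add: lcm_power_power)
  then show ?thesis by (simp only: double_sum_weighted_two_power_max)
qed

lemma lcm_sum_prod_prime_powers:
  assumes "finite P" "\<forall>p\<in>P. Factorial_Ring.prime p"
  shows "lcm_sum (\<Prod>p\<in>P. p ^ e p) = (\<Prod>p\<in>P. lcm_sum (p ^ e p))"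
  using assms
proof (induction P rule: finite_induct)
  case empty
  show ?case by (simp add: lcm_sum_def)
next
  case (insert x P)
  have "coprime (x ^ e x) (p ^ e p)" if "p \<in> P" for p
  proof -
    have "x \<noteq> p" using insert.hyps(2) that by blast
    then have "coprime x p" using insert.prems that by (intro primes_coprime) auto
    then show ?thesis by simp
  qed
  then have "coprime (x ^ e x) (\<Prod>p\<in>P. p ^ e p)" by (rule prod_coprime_right)
  moreover have "0 < x ^ e x" "0 < (\<Prod>p\<in>P. p ^ e p)"
    using insert prime_gt_0_nat by (simp_all add: prod_pos)
  ultimately show ?case using insert by (simp add: lcm_sum_mult)
qed

lemma lcm_sum_eq_gfun:
  assumes "0 < m"
  shows "real (lcm_sum m) = gfun m"
proof -
  have "lcm_sum m = (\<Prod>p\<in>prime_factors m. lcm_sum (p ^ multiplicity p m))"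
    by (subst prime_factorization_nat[OF assms]) (rule lcm_sum_prod_prime_powers, auto)
  then have "real (lcm_sum m) = (\<Prod>p\<in>prime_factors m. real (lcm_sum (p ^ multiplicity p m)))"
    by simp
  also have "\<dots> = gfun m"
    unfolding gfun_def Let_def by (intro prod.cong refl lcm_sum_prime_power) auto
  finally show ?thesis .
qed

section \<open>Counting residues\<close>

lemma int_subgroup_eq_multiples:
  fixes Z :: "int set"
  assumes N: "N \<in> Z" "N \<noteq> 0" and diff: "\<And>a b. a \<in> Z \<Longrightarrow> b \<in> Z \<Longrightarrow> a - b \<in> Z"
  obtains d :: nat where "0 < d" "Z = {k. int d dvd k}"
proof -
  have zero: "0 \<in> Z" using diff[OF N(1) N(1)] by simp
  have neg: "- a \<in> Z" if "a \<in> Z" for a using diff[OF zero that] by simp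
  have add: "a + b \<in> Z" if "a \<in> Z" "b \<in> Z" for a b using diff[OF that(1) neg[OF that(2)]] by simp
  have "0 < nat \<bar>N\<bar> \<and> int (nat \<bar>N\<bar>) \<in> Z" using N neg by (cases "0 \<le> N") auto
  then have "\<exists>d. 0 < d \<and> int d \<in> Z" ..
  define d where "d = (LEAST d. 0 < d \<and> int d \<in> Z)"
  have d: "0 < d" "int d \<in> Z" using LeastI_ex[OF \<open>\<exists>d. _\<close>] unfolding d_def by auto
  have d_min: "d \<le> e" if "0 < e" "int e \<in> Z" for e unfolding d_def by (rule Least_le) (use that in simp)
  have mult: "int d * q \<in> Z" for q
  proof (induction q rule: int_induct[where k = 0])
    case base show ?case using zero by simp
  next
    case (step1 i) show ?case using add[OF step1(2) d(2)] by (simp add: algebra_simps)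
  next
    case (step2 i) show ?case using diff[OF step2(2) d(2)] by (simp add: algebra_simps)
  qed
  have "Z = {k. int d dvd k}"
  proof (intro equalityI subsetI)
    fix k assume k: "k \<in> Z"
    have "k mod int d \<in> Z" using diff[OF k mult[of "k div int d"]] by (simp add: minus_mult_div_eq_mod)
    then have "int (nat (k mod int d)) \<in> Z" using d(1) by simp
    moreover have "nat (k mod int d) < d" using d(1) by (simp add: nat_less_iff)
    ultimately have "nat (k mod int d) = 0" using d_min by (meson not_gr0 not_le)
    then have "k mod int d \<le> 0" by simp
    then have "k mod int d = 0" using d(1) by (intro antisym) simp_all
    then show "k \<in> {k. int d dvd k}" by (simp add: dvd_eq_mod_eq_0)
  next
    fix k assume "k \<in> {k. int d dvd k}"
    then show "k \<in> Z" using mult by auto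
  qed
  with d(1) show thesis by (rule that)
qed

lemma card_residue_class:
  fixes d e c :: nat
  assumes "0 < e" "e dvd d"
  shows "card {r. r < d \<and> r mod e = c mod e} = d div e"
proof -
  have d: "d div e * e = d" using assms(2) by simp
  have "{r. r < d \<and> r mod e = c mod e} = (\<lambda>q. q * e + c mod e) ` {..<d div e}"
  proof (intro equalityI subsetI)
    fix r assume "r \<in> {r. r < d \<and> r mod e = c mod e}"
    then have r: "r < d" "r mod e = c mod e" by simp_all
    have "r = r div e * e + c mod e" using r(2) div_mult_mod_eq[of r e] by simp
    moreover have "r div e < d div e" using r(1) d by (intro less_mult_imp_div_less) simp
    ultimately show "r \<in> (\<lambda>q. q * e + c mod e) ` {..<d div e}" by blast
  next
    fix r assume "r \<in> (\<lambda>q. q * e + c mod e) ` {..<d div e}"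
    then obtain q where q: "q < d div e" "r = q * e + c mod e" by blast
    then have "Suc q * e \<le> d div e * e" by (intro mult_le_mono1) simp
    then have "q * e + e \<le> d" using d by simp
    moreover have "c mod e < e" using assms by simp
    ultimately show "r \<in> {r. r < d \<and> r mod e = c mod e}" using q by simp
  qed
  moreover have "inj_on (\<lambda>q. q * e + c mod e) {..<d div e}" using assms by (simp add: inj_on_def)
  ultimately show ?thesis by (simp add: card_image)
qed

lemma card_congruent_pairs:
  fixes d1 d2 e :: nat
  assumes "0 < e" "e dvd d2"
  shows "card {(r1, r2). r1 < d1 \<and> r2 < d2 \<and> int e dvd int r1 - int r2} = d1 * (d2 div e)"
proof -
  have "int e dvd int r1 - int r2 \<longleftrightarrow> r2 mod e = r1 mod e" for r1 r2
    by (metis mod_eq_dvd_iff of_nat_eq_iff zmod_int)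
  then have "{(r1, r2). r1 < d1 \<and> r2 < d2 \<and> int e dvd int r1 - int r2}
      = (SIGMA r1:{..<d1}. {r2. r2 < d2 \<and> r2 mod e = r1 mod e})"
    by auto
  then show ?thesis using assms by (simp add: card_residue_class)
qed

lemma int_dvd_double_iff: "int g dvd 2 * z \<longleftrightarrow> int (if even g then g div 2 else g) dvd z"
proof (cases "even g")
  case True
  then show ?thesis by (auto elim!: evenE)
next
  case False
  then have "coprime (int g) 2" by simp
  then show ?thesis using False by (simp add: coprime_dvd_mult_right_iff)
qed

definition residue_pairs_gcd_dvd_double :: "nat \<Rightarrow> nat \<Rightarrow> (nat \<times> nat) set" where
  "residue_pairs_gcd_dvd_double d1 d2 =
     {(r1, r2). r1 < d1 \<and> r2 < d2 \<and> int (gcd d1 d2) dvd 2 * (int r1 - int r2)}"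

lemma card_residue_pairs_gcd_dvd_double:
  assumes "0 < d1" "0 < d2"
  shows "card (residue_pairs_gcd_dvd_double d1 d2) = (if even d1 \<and> even d2 then 2 else 1) * lcm d1 d2"
proof -
  define g where "g = gcd d1 d2"
  define c :: nat where "c = (if even g then 2 else 1)"
  define e where "e = (if even g then g div 2 else g)"
  have ge: "g = e * c" unfolding e_def c_def by auto
  have "0 < g" using assms unfolding g_def by simp
  then have e_pos: "0 < e" using ge by simp
  have "e dvd g" using ge by simp
  then have "e dvd d2" unfolding g_def using gcd_dvd2 dvd_trans by blast
  note e = e_pos this
  have "card (residue_pairs_gcd_dvd_double d1 d2) = d1 * (d2 div e)"
    unfolding residue_pairs_gcd_dvd_double_def g_def[symmetric] int_dvd_double_iff e_def[symmetric]
    by (rule card_congruent_pairs[OF e])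
  also have "\<dots> = c * lcm d1 d2"
  proof -
    have "e * (d1 * (d2 div e)) = g * lcm d1 d2" using e(2) by (simp add: g_def)
    also have "\<dots> = e * (c * lcm d1 d2)" by (simp add: ge)
    finally show ?thesis using e(1) by simp
  qed
  finally show ?thesis unfolding c_def g_def by simp
qed

lemma card_pairs_off_square:
  assumes "finite A" "B \<subseteq> A"
    and P: "\<And>x y. x \<in> A \<Longrightarrow> y \<in> A \<Longrightarrow> x \<notin> B \<or> y \<notin> B \<Longrightarrow> P x y"
  shows "card {(x, y). x \<in> A \<and> y \<in> A \<and> P x y} + card B ^ 2
       = card A ^ 2 + card {(x, y). x \<in> B \<and> y \<in> B \<and> P x y}"
proof -
  let ?Q = "{(x, y). x \<in> B \<and> y \<in> B \<and> P x y}"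
  have fin: "finite (A \<times> A)" "finite ?Q"
    using assms(1,2) finite_subset[of ?Q "A \<times> A"] by auto
  have "{(x, y). x \<in> A \<and> y \<in> A \<and> P x y} = (A \<times> A - B \<times> B) \<union> ?Q"
    using assms(2) P by auto
  moreover have "card ((A \<times> A - B \<times> B) \<union> ?Q) = card (A \<times> A - B \<times> B) + card ?Q"
    using fin by (intro card_Un_disjoint) auto
  ultimately have "card {(x, y). x \<in> A \<and> y \<in> A \<and> P x y} = card (A \<times> A - B \<times> B) + card ?Q"
    by simp
  moreover have "card (A \<times> A - B \<times> B) + card B ^ 2 = card A ^ 2"
  proof -
    have "B \<times> B \<subseteq> A \<times> A" using assms(2) by auto
    then have "card (A \<times> A - B \<times> B) + card (B \<times> B) = card (A \<times> A)"
      using fin(1) by (metis card_Diff_subset card_mono finite_subset le_add_diff_inverse2)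
    then show ?thesis by (simp add: card_cartesian_product power2_eq_square)
  qed
  ultimately show ?thesis by simp
qed

lemma congruent_pair_swapped_difference:
  fixes k1 k2 :: int and d1 d2 :: nat
  assumes "int (gcd d1 d2) dvd 2 * (k1 - k2)"
  obtains k1' k2' where "int d1 dvd k1' - k1" "int d2 dvd k2' - k2" "k2' - k1' = k1 - k2"
proof -
  obtain t where t: "2 * (k1 - k2) = int (gcd d1 d2) * t" using assms by (rule dvdE)
  obtain u v where uv: "u * int d1 + v * int d2 = int (gcd d1 d2)"
    using bezout_int[of "int d1" "int d2"] by auto
  show thesis
  proof (rule that[of "k1 - t * u * int d1" "k2 + t * v * int d2"])
    have "(k2 + t * v * int d2) - (k1 - t * u * int d1) = k2 - k1 + int (gcd d1 d2) * t"
      by (simp flip: uv add: algebra_simps)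
    then show "(k2 + t * v * int d2) - (k1 - t * u * int d1) = k1 - k2"
      unfolding t[symmetric] by simp
  qed simp_all
qed

section \<open>The dicyclic group\<close>

text \<open>Dic_elem n k b is the element a^k \<gamma>^b, for an arbitrary integer exponent k.\<close>

definition Dic_elem :: "nat \<Rightarrow> int \<Rightarrow> bool \<Rightarrow> nat \<times> bool" where
  "Dic_elem n k b = (nat (k mod (2 * int n)), b)"

lemma Dic_elem_eq_iff:
  "0 < n \<Longrightarrow> Dic_elem n k b = Dic_elem n l c \<longleftrightarrow> k mod (2 * int n) = l mod (2 * int n) \<and> b = c"
  by (simp add: Dic_elem_def eq_nat_nat_iff)

lemma Dic_elem_in_carrier: "0 < n \<Longrightarrow> Dic_elem n k b \<in> carrier (Dic n)"
  by (simp add: Dic_elem_def Dic_def nat_less_iff)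

lemma Dic_carrier_elem:
  assumes "x \<in> carrier (Dic n)"
  obtains k b where "x = Dic_elem n k b"
proof
  show "x = Dic_elem n (int (fst x)) (snd x)"
    using assms by (auto simp: Dic_def Dic_elem_def)
qed

lemma Dic_one_elem: "\<one>\<^bsub>Dic n\<^esub> = Dic_elem n 0 False"
  by (simp add: Dic_def Dic_elem_def)

lemma Dic_mult_elem:
  assumes "0 < n"
  shows "Dic_elem n k b \<otimes>\<^bsub>Dic n\<^esub> Dic_elem n l c
       = Dic_elem n (k + (if b then - l else l) + (if b \<and> c then int n else 0)) (b \<noteq> c)"
proof -
  define i where "i = k mod (2 * int n)"
  define j where "j = l mod (2 * int n)"
  have ij: "0 \<le> i" "0 \<le> j" "j < 2 * int n" using assms by (simp_all add: i_def j_def)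
  have "int ((nat i + (if b then 2*n - nat j else nat j) + (if b \<and> c then n else 0)) mod (2*n))
      = (i + (if b then 2 * int n - j else j) + (if b \<and> c then int n else 0)) mod (2 * int n)"
    using ij by (simp add: zmod_int)
  also have "\<dots> = (k + (if b then - l else l) + (if b \<and> c then int n else 0)) mod (2 * int n)"
  proof -
    have "2 * int n dvd i - k" "2 * int n dvd j - l"
      by (simp_all add: i_def j_def flip: mod_eq_dvd_iff)
    then have "2 * int n dvd (i - k) + (if b then (l - j) + 2 * int n else j - l)"
      by (cases b) (simp_all add: dvd_diff_commute)
    then show ?thesis
      unfolding mod_eq_dvd_iff by (cases b) (simp_all add: algebra_simps)
  qed
  finally have "(nat i + (if b then 2*n - nat j else nat j) + (if b \<and> c then n else 0)) mod (2*n)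
      = nat ((k + (if b then - l else l) + (if b \<and> c then int n else 0)) mod (2 * int n))"
    by (metis nat_int)
  from this[unfolded i_def j_def] show ?thesis by (simp add: Dic_def Dic_elem_def)
qed

lemma Dic_group:
  assumes "0 < n"
  shows "group (Dic n)"
proof (rule groupI)
  show "\<one>\<^bsub>Dic n\<^esub> \<in> carrier (Dic n)"
    by (simp add: assms Dic_one_elem Dic_elem_in_carrier)
next
  fix x y assume "x \<in> carrier (Dic n)" "y \<in> carrier (Dic n)"
  then obtain k b l c where "x = Dic_elem n k b" "y = Dic_elem n l c"
    by (metis Dic_carrier_elem)
  then show "x \<otimes>\<^bsub>Dic n\<^esub> y \<in> carrier (Dic n)"
    by (simp add: assms Dic_mult_elem Dic_elem_in_carrier)
next
  fix x y z assume "x \<in> carrier (Dic n)" "y \<in> carrier (Dic n)" "z \<in> carrier (Dic n)"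
  then obtain k b l c j e where "x = Dic_elem n k b" "y = Dic_elem n l c" "z = Dic_elem n j e"
    by (metis Dic_carrier_elem)
  then show "x \<otimes>\<^bsub>Dic n\<^esub> y \<otimes>\<^bsub>Dic n\<^esub> z = x \<otimes>\<^bsub>Dic n\<^esub> (y \<otimes>\<^bsub>Dic n\<^esub> z)"
    by (cases b; cases c; cases e)
      (simp_all add: assms Dic_mult_elem Dic_elem_eq_iff mod_eq_dvd_iff algebra_simps)
next
  fix x assume "x \<in> carrier (Dic n)"
  then obtain k b where x: "x = Dic_elem n k b" by (rule Dic_carrier_elem)
  then show "\<one>\<^bsub>Dic n\<^esub> \<otimes>\<^bsub>Dic n\<^esub> x = x"
    by (simp add: assms Dic_one_elem Dic_mult_elem)
  have "Dic_elem n (if b then k + int n else - k) b \<otimes>\<^bsub>Dic n\<^esub> x = \<one>\<^bsub>Dic n\<^esub>"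
    by (simp add: x assms Dic_mult_elem Dic_one_elem Dic_elem_eq_iff)
  then show "\<exists>y\<in>carrier (Dic n). y \<otimes>\<^bsub>Dic n\<^esub> x = \<one>\<^bsub>Dic n\<^esub>"
    using Dic_elem_in_carrier[OF assms] by blast
qed

lemma Dic_inv_elem:
  assumes "0 < n"
  shows "inv\<^bsub>Dic n\<^esub> Dic_elem n k b = Dic_elem n (if b then k + int n else - k) b"
  by (rule group.inv_equality[OF Dic_group[OF assms]])
     (simp_all add: assms Dic_mult_elem Dic_one_elem Dic_elem_eq_iff Dic_elem_in_carrier)

lemma Dic_set_eqI:
  assumes "A \<subseteq> carrier (Dic n)" "B \<subseteq> carrier (Dic n)"
    and "\<And>k b. Dic_elem n k b \<in> A \<longleftrightarrow> Dic_elem n k b \<in> B"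
  shows "A = B"
proof (intro equalityI subsetI)
  fix x assume "x \<in> A"
  moreover obtain k b where "x = Dic_elem n k b" using \<open>x \<in> A\<close> assms(1) by (meson Dic_carrier_elem subsetD)
  ultimately show "x \<in> B" using assms(3) by simp
next
  fix x assume "x \<in> B"
  moreover obtain k b where "x = Dic_elem n k b" using \<open>x \<in> B\<close> assms(2) by (meson Dic_carrier_elem subsetD)
  ultimately show "x \<in> A" using assms(3) by simp
qed

section \<open>Subgroups\<close>

text \<open>For d dividing 2n, Dic_sub_a n d is the cyclic group generated by a^d; for d dividing n
  and r < d, Dic_sub_a_gamma n d r is generated by a^d and a^r \<gamma>.\<close>

definition Dic_sub_a :: "nat \<Rightarrow> nat \<Rightarrow> (nat \<times> bool) set" where
  "Dic_sub_a n d = {Dic_elem n k False | k. int d dvd k}"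

definition Dic_sub_a_gamma :: "nat \<Rightarrow> nat \<Rightarrow> nat \<Rightarrow> (nat \<times> bool) set" where
  "Dic_sub_a_gamma n d r = {Dic_elem n k b | k b. int d dvd k - (if b then int r else 0)}"

lemma Dic_elem_eq_dvd:
  assumes "0 < n" "d dvd 2 * n" "Dic_elem n k b = Dic_elem n l c"
  shows "int d dvd k - l"
proof -
  have "int d dvd 2 * int n" using assms(2) by (metis of_nat_dvd_iff of_nat_mult of_nat_numeral)
  moreover have "2 * int n dvd k - l" using assms by (simp add: Dic_elem_eq_iff mod_eq_dvd_iff)
  ultimately show ?thesis by (rule dvd_trans)
qed

lemma mem_Dic_sub_a:
  assumes "0 < n" "d dvd 2 * n"
  shows "Dic_elem n k b \<in> Dic_sub_a n d \<longleftrightarrow> \<not> b \<and> int d dvd k"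
proof
  assume "Dic_elem n k b \<in> Dic_sub_a n d"
  then obtain l where l: "Dic_elem n k b = Dic_elem n l False" "int d dvd l"
    by (auto simp: Dic_sub_a_def)
  have "int d dvd (k - l) + l" using Dic_elem_eq_dvd[OF assms l(1)] l(2) by (rule dvd_add)
  then show "\<not> b \<and> int d dvd k" using l by (simp add: Dic_elem_def)
next
  assume "\<not> b \<and> int d dvd k"
  then show "Dic_elem n k b \<in> Dic_sub_a n d"
    unfolding Dic_sub_a_def by (intro CollectI exI[of _ k]) simp
qed

lemma mem_Dic_sub_a_gamma:
  assumes "0 < n" "d dvd 2 * n"
  shows "Dic_elem n k b \<in> Dic_sub_a_gamma n d r \<longleftrightarrow> int d dvd k - (if b then int r else 0)"
proof
  assume "Dic_elem n k b \<in> Dic_sub_a_gamma n d r"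
  then obtain l where l: "Dic_elem n k b = Dic_elem n l b" "int d dvd l - (if b then int r else 0)"
    by (auto simp: Dic_sub_a_gamma_def Dic_elem_def)
  have "int d dvd (k - l) + (l - (if b then int r else 0))"
    using Dic_elem_eq_dvd[OF assms l(1)] l(2) by (rule dvd_add)
  then show "int d dvd k - (if b then int r else 0)" by simp
next
  assume "int d dvd k - (if b then int r else 0)"
  then show "Dic_elem n k b \<in> Dic_sub_a_gamma n d r"
    unfolding Dic_sub_a_gamma_def by (intro CollectI exI[of _ k] exI[of _ b]) simp
qed

lemma Dic_sub_a_subgroup:
  assumes "0 < n" "d dvd 2 * n"
  shows "subgroup (Dic_sub_a n d) (Dic n)"
proof (rule group.subgroupI[OF Dic_group[OF assms(1)]])
  show "Dic_sub_a n d \<subseteq> carrier (Dic n)"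
    using assms(1) by (auto simp: Dic_sub_a_def Dic_elem_in_carrier)
  show "Dic_sub_a n d \<noteq> {}"
    using mem_Dic_sub_a[OF assms, of 0 False] by auto
next
  fix x y assume "x \<in> Dic_sub_a n d" "y \<in> Dic_sub_a n d"
  then obtain k l where "x = Dic_elem n k False" "y = Dic_elem n l False" "int d dvd k" "int d dvd l"
    by (auto simp: Dic_sub_a_def)
  then show "inv\<^bsub>Dic n\<^esub> x \<in> Dic_sub_a n d" "x \<otimes>\<^bsub>Dic n\<^esub> y \<in> Dic_sub_a n d"
    by (simp_all add: assms Dic_inv_elem Dic_mult_elem mem_Dic_sub_a)
qed

lemma Dic_sub_a_gamma_subgroup:
  assumes "0 < n" "d dvd n"
  shows "subgroup (Dic_sub_a_gamma n d r) (Dic n)"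
proof (rule group.subgroupI[OF Dic_group[OF assms(1)]])
  have dn: "int d dvd int n" using assms(2) by simp
  show "Dic_sub_a_gamma n d r \<subseteq> carrier (Dic n)"
    using assms(1) by (auto simp: Dic_sub_a_gamma_def Dic_elem_in_carrier)
  show "Dic_sub_a_gamma n d r \<noteq> {}"
    using mem_Dic_sub_a_gamma[OF assms(1), of d 0 False r] assms(2) by auto
  fix x y assume "x \<in> Dic_sub_a_gamma n d r" "y \<in> Dic_sub_a_gamma n d r"
  then obtain k b l c where xy: "x = Dic_elem n k b" "y = Dic_elem n l c"
    and k: "int d dvd k - (if b then int r else 0)" and l: "int d dvd l - (if c then int r else 0)"
    by (auto simp: Dic_sub_a_gamma_def)
  have "int d dvd (k - (if b then int r else 0)) + (if b then int n else 0)"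
    using k dn by auto
  then show "inv\<^bsub>Dic n\<^esub> x \<in> Dic_sub_a_gamma n d r"
    using assms xy by (auto simp: Dic_inv_elem mem_Dic_sub_a_gamma algebra_simps)
  have "k + (if b then - l else l) + (if b \<and> c then int n else 0) - (if b \<noteq> c then int r else 0)
      = (k - (if b then int r else 0)) + (if b then - (l - (if c then int r else 0)) else l - (if c then int r else 0))
        + (if b \<and> c then int n else 0)"
    by (cases b; cases c) simp_all
  also have "int d dvd \<dots>"
    using k l dn by (intro dvd_add) (auto split: if_splits simp: dvd_diff_commute)
  finally show "x \<otimes>\<^bsub>Dic n\<^esub> y \<in> Dic_sub_a_gamma n d r"
    using assms xy by (simp add: Dic_mult_elem mem_Dic_sub_a_gamma)
qed

lemma Dic_sub_a_normal:
  assumes "0 < n" "d dvd 2 * n"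
  shows "Dic_sub_a n d \<lhd> Dic n"
  unfolding group.normal_inv_iff[OF Dic_group[OF assms(1)]]
proof (intro conjI ballI Dic_sub_a_subgroup[OF assms])
  fix x h assume "x \<in> carrier (Dic n)" "h \<in> Dic_sub_a n d"
  moreover obtain l c where "x = Dic_elem n l c"
    using \<open>x \<in> carrier (Dic n)\<close> by (rule Dic_carrier_elem)
  moreover obtain k where "h = Dic_elem n k False" "int d dvd k"
    using \<open>h \<in> Dic_sub_a n d\<close> by (auto simp: Dic_sub_a_def)
  ultimately show "x \<otimes>\<^bsub>Dic n\<^esub> h \<otimes>\<^bsub>Dic n\<^esub> inv\<^bsub>Dic n\<^esub> x \<in> Dic_sub_a n d"
    using assms by (simp add: Dic_inv_elem Dic_mult_elem mem_Dic_sub_a)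
qed

lemma Dic_subgroup_rotations:
  assumes n: "0 < n" and H: "subgroup H (Dic n)"
  obtains d where "0 < d" "d dvd 2 * n" "\<And>k. Dic_elem n k False \<in> H \<longleftrightarrow> int d dvd k"
proof -
  interpret H: subgroup H "Dic n" by (rule H)
  obtain d where d: "0 < d" and Z: "{k. Dic_elem n k False \<in> H} = {k. int d dvd k}"
  proof (rule int_subgroup_eq_multiples)
    show "2 * int n \<in> {k. Dic_elem n k False \<in> H}"
      using H.one_closed by (simp add: Dic_one_elem Dic_elem_def)
    show "2 * int n \<noteq> 0" using n by simp
    fix a b assume "a \<in> {k. Dic_elem n k False \<in> H}" "b \<in> {k. Dic_elem n k False \<in> H}"
    then have "Dic_elem n a False \<otimes>\<^bsub>Dic n\<^esub> inv\<^bsub>Dic n\<^esub> Dic_elem n b False \<in> H" by simp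
    then show "a - b \<in> {k. Dic_elem n k False \<in> H}" by (simp add: n Dic_inv_elem Dic_mult_elem)
  qed
  then have a_mem: "Dic_elem n k False \<in> H \<longleftrightarrow> int d dvd k" for k by blast
  have "int d dvd int (2 * n)"
    using a_mem[of "int (2 * n)"] H.one_closed by (simp add: Dic_one_elem Dic_elem_def)
  then have "d dvd 2 * n" by (simp only: of_nat_dvd_iff)
  from that[OF d this a_mem] show thesis .
qed

lemma Dic_subgroup_gammas:
  assumes n: "0 < n" and H: "subgroup H (Dic n)"
    and a_mem: "\<And>k. Dic_elem n k False \<in> H \<longleftrightarrow> int d dvd k" and k0: "Dic_elem n k0 True \<in> H"
  shows "d dvd n" and "Dic_elem n k True \<in> H \<longleftrightarrow> int d dvd k - k0"
proof -
  interpret H: subgroup H "Dic n" by (rule H)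
  have "Dic_elem n k0 True \<otimes>\<^bsub>Dic n\<^esub> Dic_elem n k0 True = Dic_elem n (int n) False"
    by (simp add: n Dic_mult_elem)
  then show "d dvd n" using H.m_closed[OF k0 k0] a_mem by simp
  show "Dic_elem n k True \<in> H \<longleftrightarrow> int d dvd k - k0"
  proof
    assume "Dic_elem n k True \<in> H"
    moreover have "inv\<^bsub>Dic n\<^esub> Dic_elem n k0 True \<otimes>\<^bsub>Dic n\<^esub> Dic_elem n k True = Dic_elem n (k0 - k) False"
      by (simp add: n Dic_inv_elem Dic_mult_elem Dic_elem_eq_iff mod_eq_dvd_iff)
    ultimately show "int d dvd k - k0" using k0 a_mem by (metis H.m_closed H.m_inv_closed dvd_diff_commute)
  next
    assume "int d dvd k - k0"
    moreover have "Dic_elem n k0 True \<otimes>\<^bsub>Dic n\<^esub> Dic_elem n (k0 - k) False = Dic_elem n k True"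
      by (simp add: n Dic_mult_elem)
    ultimately show "Dic_elem n k True \<in> H" using k0 a_mem by (metis H.m_closed dvd_diff_commute)
  qed
qed

lemma Dic_subgroup_cases:
  assumes n: "0 < n" and H: "subgroup H (Dic n)"
  shows "(\<exists>d. d dvd 2 * n \<and> H = Dic_sub_a n d)
       \<or> (\<exists>d r. d dvd n \<and> r < d \<and> H = Dic_sub_a_gamma n d r)"
proof -
  obtain d where d: "0 < d" "d dvd 2 * n" and a_mem: "\<And>k. Dic_elem n k False \<in> H \<longleftrightarrow> int d dvd k"
    using Dic_subgroup_rotations[OF n H] by blast
  show ?thesis
  proof (cases "\<exists>k. Dic_elem n k True \<in> H")
    case False
    have "H = Dic_sub_a n d"
    proof (rule Dic_set_eqI[OF subgroup.subset[OF H] subgroup.subset[OF Dic_sub_a_subgroup[OF n d(2)]]])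
      show "Dic_elem n k b \<in> H \<longleftrightarrow> Dic_elem n k b \<in> Dic_sub_a n d" for k b
        using False by (cases b) (auto simp: a_mem mem_Dic_sub_a n d(2))
    qed
    with d(2) show ?thesis by blast
  next
    case True
    then obtain k0 where k0: "Dic_elem n k0 True \<in> H" ..
    note gammas = Dic_subgroup_gammas[OF n H a_mem k0]
    define r where "r = nat (k0 mod int d)"
    have r: "r < d" "int r = k0 mod int d" using d(1) by (simp_all add: r_def nat_less_iff)
    have "H = Dic_sub_a_gamma n d r"
    proof (rule Dic_set_eqI[OF subgroup.subset[OF H] subgroup.subset[OF Dic_sub_a_gamma_subgroup[OF n gammas(1)]]])
      fix k b
      have "int d dvd k - k0 \<longleftrightarrow> int d dvd k - int r"
        unfolding r(2) by (metis mod_eq_dvd_iff mod_mod_trivial)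
      then show "Dic_elem n k b \<in> H \<longleftrightarrow> Dic_elem n k b \<in> Dic_sub_a_gamma n d r"
        using gammas(1) by (cases b) (simp_all add: a_mem gammas(2) mem_Dic_sub_a_gamma n)
    qed
    with gammas(1) r(1) show ?thesis by blast
  qed
qed

lemma mem_set_mult_Dic_sub_a_gamma:
  "x \<in> Dic_sub_a_gamma n d1 r1 <#>\<^bsub>Dic n\<^esub> Dic_sub_a_gamma n d2 r2 \<longleftrightarrow>
    (\<exists>k1 b k2 c. int d1 dvd k1 - (if b then int r1 else 0) \<and> int d2 dvd k2 - (if c then int r2 else 0)
       \<and> x = Dic_elem n k1 b \<otimes>\<^bsub>Dic n\<^esub> Dic_elem n k2 c)"
  unfolding set_mult_def Dic_sub_a_gamma_def by blast

lemma Dic_sub_a_gamma_mult_subset: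
  assumes n: "0 < n" and cond: "int (gcd d1 d2) dvd 2 * (int r1 - int r2)"
  shows "Dic_sub_a_gamma n d1 r1 <#>\<^bsub>Dic n\<^esub> Dic_sub_a_gamma n d2 r2
       \<subseteq> Dic_sub_a_gamma n d2 r2 <#>\<^bsub>Dic n\<^esub> Dic_sub_a_gamma n d1 r1"
proof
  fix x assume "x \<in> Dic_sub_a_gamma n d1 r1 <#>\<^bsub>Dic n\<^esub> Dic_sub_a_gamma n d2 r2"
  then obtain k1 b k2 c where x: "x = Dic_elem n k1 b \<otimes>\<^bsub>Dic n\<^esub> Dic_elem n k2 c"
    and k1: "int d1 dvd k1 - (if b then int r1 else 0)" and k2: "int d2 dvd k2 - (if c then int r2 else 0)"
    unfolding mem_set_mult_Dic_sub_a_gamma by blast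
  have "\<exists>k2' c' k1' b'. int d2 dvd k2' - (if c' then int r2 else 0) \<and> int d1 dvd k1' - (if b' then int r1 else 0)
      \<and> x = Dic_elem n k2' c' \<otimes>\<^bsub>Dic n\<^esub> Dic_elem n k1' b'"
  proof (cases "b \<and> c")
    case True
    have g: "int (gcd d1 d2) dvd k1 - int r1" "int (gcd d1 d2) dvd k2 - int r2"
      using dvd_trans[of "int (gcd d1 d2)" "int d1" "k1 - int r1"] k1
        dvd_trans[of "int (gcd d1 d2)" "int d2" "k2 - int r2"] k2 True by simp_all
    have "int (gcd d1 d2) dvd 2 * (int r1 - int r2) + 2 * (k1 - int r1) - 2 * (k2 - int r2)"
      using dvd_diff[OF dvd_add[OF cond dvd_mult[OF g(1)]] dvd_mult[OF g(2)]] .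
    also have "2 * (int r1 - int r2) + 2 * (k1 - int r1) - 2 * (k2 - int r2) = 2 * (k1 - k2)"
      by (simp add: algebra_simps)
    finally obtain k1' k2' where k': "int d1 dvd k1' - k1" "int d2 dvd k2' - k2" "k2' - k1' = k1 - k2"
      by (rule congruent_pair_swapped_difference)
    have "k2' + - k1' + int n = k1 + - k2 + int n" using k'(3) by simp
    with True have "x = Dic_elem n k2' True \<otimes>\<^bsub>Dic n\<^esub> Dic_elem n k1' True"
      by (simp only: x Dic_mult_elem[OF n] if_True simp_thms)
    moreover have "int d1 dvd (k1' - k1) + (k1 - int r1)" "int d2 dvd (k2' - k2) + (k2 - int r2)"
      using k' k1 k2 True by (simp_all only: dvd_add if_True)
    ultimately show ?thesis by (intro exI[of _ k2'] exI[of _ True] exI[of _ k1']) simp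
  next
    case False
    then have "x = Dic_elem n (if b then - k2 else k2) c \<otimes>\<^bsub>Dic n\<^esub> Dic_elem n (if c then - k1 else k1) b"
      using n by (cases b; cases c) (auto simp: x Dic_mult_elem add.commute)
    then show ?thesis using k1 k2 False by (intro exI conjI) (auto simp: dvd_diff_commute)
  qed
  then show "x \<in> Dic_sub_a_gamma n d2 r2 <#>\<^bsub>Dic n\<^esub> Dic_sub_a_gamma n d1 r1"
    unfolding mem_set_mult_Dic_sub_a_gamma .
qed

lemma Dic_sub_a_gamma_permute_imp_dvd:
  assumes n: "0 < n" and d: "d1 dvd n" "d2 dvd n"
    and eq: "Dic_sub_a_gamma n d1 r1 <#>\<^bsub>Dic n\<^esub> Dic_sub_a_gamma n d2 r2
           = Dic_sub_a_gamma n d2 r2 <#>\<^bsub>Dic n\<^esub> Dic_sub_a_gamma n d1 r1"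
  shows "int (gcd d1 d2) dvd 2 * (int r1 - int r2)"
proof -
  let ?g = "int (gcd d1 d2)"
  have gn: "gcd d1 d2 dvd n" using d(2) by (metis dvd_trans gcd_dvd2)
  have "Dic_elem n (int r1) True \<otimes>\<^bsub>Dic n\<^esub> Dic_elem n (int r2) True
      \<in> Dic_sub_a_gamma n d2 r2 <#>\<^bsub>Dic n\<^esub> Dic_sub_a_gamma n d1 r1"
    unfolding eq[symmetric] mem_set_mult_Dic_sub_a_gamma
    by (intro exI[of _ "int r1"] exI[of _ True] exI[of _ "int r2"]) simp
  then obtain l c k b where l: "int d2 dvd l - (if c then int r2 else 0)"
    and k: "int d1 dvd k - (if b then int r1 else 0)"
    and "Dic_elem n (int r1) True \<otimes>\<^bsub>Dic n\<^esub> Dic_elem n (int r2) True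
         = Dic_elem n l c \<otimes>\<^bsub>Dic n\<^esub> Dic_elem n k b"
    unfolding mem_set_mult_Dic_sub_a_gamma by blast
  then have prod: "Dic_elem n (int r1 - int r2 + int n) False
      = Dic_elem n (l + (if c then - k else k) + (if c \<and> b then int n else 0)) (c \<noteq> b)"
    by (simp add: n Dic_mult_elem)
  then have "c = b" by (simp add: Dic_elem_def)
  from Dic_elem_eq_dvd[OF n dvd_mult[OF gn] prod]
  have diff: "?g dvd (int r1 - int r2 + int n) - (l + (if c then - k else k) + (if c \<and> b then int n else 0))" .
  have g1: "?g dvd k - (if b then int r1 else 0)" and g2: "?g dvd l - (if c then int r2 else 0)"
    using k l by (auto intro: dvd_trans[of _ "int d1"] dvd_trans[of _ "int d2"])
  show ?thesis
  proof (cases b)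
    case True
    have "?g dvd (int r1 - int r2 + int n) - (l - k + int n)" using diff True \<open>c = b\<close> by simp
    moreover have "?g dvd k - int r1" "?g dvd l - int r2" using g1 g2 True \<open>c = b\<close> by simp_all
    then have "?g dvd (k - int r1) - (l - int r2)" by (rule dvd_diff)
    ultimately have "?g dvd ((int r1 - int r2 + int n) - (l - k + int n)) - ((k - int r1) - (l - int r2))"
      by (rule dvd_diff)
    then show ?thesis by (simp add: algebra_simps)
  next
    case False
    have "?g dvd (int r1 - int r2 + int n) - (l + k)" using diff False \<open>c = b\<close> by simp
    moreover have "?g dvd l + k - int n" using g1 g2 gn False \<open>c = b\<close> by simp
    ultimately have "?g dvd ((int r1 - int r2 + int n) - (l + k)) + (l + k - int n)"
      by (rule dvd_add)
    then have "?g dvd int r1 - int r2" by simp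
    then show ?thesis by (rule dvd_mult)
  qed
qed

lemma Dic_sub_a_gamma_permute_iff:
  assumes "0 < n" "d1 dvd n" "d2 dvd n"
  shows "Dic_sub_a_gamma n d1 r1 <#>\<^bsub>Dic n\<^esub> Dic_sub_a_gamma n d2 r2
       = Dic_sub_a_gamma n d2 r2 <#>\<^bsub>Dic n\<^esub> Dic_sub_a_gamma n d1 r1
     \<longleftrightarrow> int (gcd d1 d2) dvd 2 * (int r1 - int r2)"
proof
  assume "int (gcd d1 d2) dvd 2 * (int r1 - int r2)"
  moreover from this have "int (gcd d2 d1) dvd 2 * (int r2 - int r1)"
    by (metis dvd_diff_commute gcd.commute right_diff_distrib')
  ultimately show "Dic_sub_a_gamma n d1 r1 <#>\<^bsub>Dic n\<^esub> Dic_sub_a_gamma n d2 r2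
       = Dic_sub_a_gamma n d2 r2 <#>\<^bsub>Dic n\<^esub> Dic_sub_a_gamma n d1 r1"
    using assms(1) by (intro equalityI Dic_sub_a_gamma_mult_subset)
qed (rule Dic_sub_a_gamma_permute_imp_dvd[OF assms])

section \<open>Counting subgroups and permuting pairs\<close>

definition Dic_a_subgroups :: "nat \<Rightarrow> (nat \<times> bool) set set" where
  "Dic_a_subgroups n = Dic_sub_a n ` {d. d dvd 2 * n}"

definition Dic_gamma_subgroups :: "nat \<Rightarrow> (nat \<times> bool) set set" where
  "Dic_gamma_subgroups n = (\<lambda>(d, r). Dic_sub_a_gamma n d r) ` (SIGMA d:{d. d dvd n}. {..<d})"

lemma subgroups_Dic:
  assumes "0 < n"
  shows "subgroups (Dic n) = Dic_a_subgroups n \<union> Dic_gamma_subgroups n"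
proof (intro equalityI subsetI)
  fix H assume "H \<in> subgroups (Dic n)"
  then show "H \<in> Dic_a_subgroups n \<union> Dic_gamma_subgroups n"
    using Dic_subgroup_cases[OF assms]
    unfolding subgroups_def Dic_a_subgroups_def Dic_gamma_subgroups_def by fastforce
next
  fix H assume "H \<in> Dic_a_subgroups n \<union> Dic_gamma_subgroups n"
  then show "H \<in> subgroups (Dic n)"
    unfolding subgroups_def Dic_a_subgroups_def Dic_gamma_subgroups_def
    using Dic_sub_a_subgroup[OF assms] Dic_sub_a_gamma_subgroup[OF assms] by auto
qed

lemma inj_on_Dic_sub_a:
  assumes "0 < n"
  shows "inj_on (Dic_sub_a n) {d. d dvd 2 * n}"
proof (rule inj_onI)
  have dvd: "d' dvd d" if "d dvd 2 * n" "d' dvd 2 * n" "Dic_sub_a n d = Dic_sub_a n d'" for d d'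
  proof -
    have "Dic_elem n (int d) False \<in> Dic_sub_a n d" using that(1) by (simp add: mem_Dic_sub_a assms)
    then have "Dic_elem n (int d) False \<in> Dic_sub_a n d'" by (simp only: that(3))
    then show ?thesis by (simp add: mem_Dic_sub_a[OF assms that(2)])
  qed
  fix d1 d2 assume "d1 \<in> {d. d dvd 2 * n}" "d2 \<in> {d. d dvd 2 * n}" "Dic_sub_a n d1 = Dic_sub_a n d2"
  then show "d1 = d2" using dvd[of d1 d2] dvd[of d2 d1] by (simp add: dvd_antisym)
qed

lemma inj_on_Dic_sub_a_gamma:
  assumes "0 < n"
  shows "inj_on (\<lambda>(d, r). Dic_sub_a_gamma n d r) (SIGMA d:{d. d dvd n}. {..<d})"
proof (rule inj_onI, clarify)
  have dvd: "d' dvd d \<and> int d' dvd int r - int r'"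
    if "d dvd n" "d' dvd n" "Dic_sub_a_gamma n d r = Dic_sub_a_gamma n d' r'" for d d' r r'
  proof -
    have "Dic_elem n (int d) False \<in> Dic_sub_a_gamma n d r" "Dic_elem n (int r) True \<in> Dic_sub_a_gamma n d r"
      using that(1) by (simp_all add: mem_Dic_sub_a_gamma assms)
    then have "Dic_elem n (int d) False \<in> Dic_sub_a_gamma n d' r'" "Dic_elem n (int r) True \<in> Dic_sub_a_gamma n d' r'"
      by (simp_all only: that(3))
    moreover have "d' dvd 2 * n" using that(2) by simp
    ultimately show ?thesis by (simp add: mem_Dic_sub_a_gamma assms)
  qed
  fix d1 r1 d2 r2
  assume "d1 dvd n" "d2 dvd n" "r1 < d1" "r2 < d2" "Dic_sub_a_gamma n d1 r1 = Dic_sub_a_gamma n d2 r2"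
  then have "d1 = d2" "int d2 dvd int r1 - int r2" "r1 < d2" "r2 < d2"
    using dvd[of d1 d2 r1 r2] dvd[of d2 d1 r2 r1] by (auto intro: dvd_antisym)
  then show "d1 = d2 \<and> r1 = r2"
    by (metis mod_eq_dvd_iff mod_less of_nat_eq_iff zmod_int)
qed

lemma Dic_a_gamma_subgroups_disjoint: "Dic_a_subgroups n \<inter> Dic_gamma_subgroups n = {}"
proof -
  have "Dic_elem n (int r) True \<in> Dic_sub_a_gamma n d r" "Dic_elem n (int r) True \<notin> Dic_sub_a n d'" for d d' r
    unfolding Dic_sub_a_gamma_def Dic_sub_a_def by (force, auto simp: Dic_elem_def)
  then show ?thesis unfolding Dic_a_subgroups_def Dic_gamma_subgroups_def by fastforce
qed

lemma card_Dic_a_subgroups: "0 < n \<Longrightarrow> card (Dic_a_subgroups n) = tau (2 * n)"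
  unfolding Dic_a_subgroups_def tau_def by (rule card_image[OF inj_on_Dic_sub_a])

lemma card_Dic_gamma_subgroups:
  assumes "0 < n"
  shows "card (Dic_gamma_subgroups n) = sigma n"
proof -
  have "card (Dic_gamma_subgroups n) = card (SIGMA d:{d. d dvd n}. {..<d})"
    unfolding Dic_gamma_subgroups_def by (rule card_image[OF inj_on_Dic_sub_a_gamma[OF assms]])
  also have "\<dots> = sigma n" using assms by (simp add: sigma_def)
  finally show ?thesis .
qed

lemma card_subgroups_Dic:
  assumes "0 < n"
  shows "card (subgroups (Dic n)) = tau (2 * n) + sigma n"
proof -
  have "finite (Dic_a_subgroups n)" "finite (Dic_gamma_subgroups n)"
    using assms by (simp_all add: Dic_a_subgroups_def Dic_gamma_subgroups_def)
  then show ?thesis using Dic_a_gamma_subgroups_disjoint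
    by (simp add: subgroups_Dic assms card_Un_disjoint card_Dic_a_subgroups card_Dic_gamma_subgroups)
qed

definition permuting_pairs :: "('a, 'b) monoid_scheme \<Rightarrow> 'a set set \<Rightarrow> ('a set \<times> 'a set) set" where
  "permuting_pairs G L = {(H, K). H \<in> L \<and> K \<in> L \<and> H <#>\<^bsub>G\<^esub> K = K <#>\<^bsub>G\<^esub> H}"

lemma card_permuting_subgroup_pairs_Dic:
  assumes n: "0 < n"
  shows "card (permuting_pairs (Dic n) (subgroups (Dic n))) + sigma n ^ 2
     = (tau (2 * n) + sigma n) ^ 2 + card (permuting_pairs (Dic n) (Dic_gamma_subgroups n))"
proof -
  have fin: "finite (Dic_a_subgroups n)" "finite (Dic_gamma_subgroups n)"
    using n by (simp_all add: Dic_a_subgroups_def Dic_gamma_subgroups_def)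
  have normal: "N \<lhd> Dic n" if "N \<in> subgroups (Dic n)" "N \<notin> Dic_gamma_subgroups n" for N
    using that Dic_sub_a_normal[OF n] by (auto simp: subgroups_Dic n Dic_a_subgroups_def)
  have "H <#>\<^bsub>Dic n\<^esub> K = K <#>\<^bsub>Dic n\<^esub> H"
    if "H \<in> subgroups (Dic n)" "K \<in> subgroups (Dic n)"
      and "H \<notin> Dic_gamma_subgroups n \<or> K \<notin> Dic_gamma_subgroups n" for H K
    using that normal group.commut_normal[OF Dic_group[OF n]] unfolding subgroups_def by blast
  then have "card (permuting_pairs (Dic n) (subgroups (Dic n))) + card (Dic_gamma_subgroups n) ^ 2
     = card (subgroups (Dic n)) ^ 2 + card (permuting_pairs (Dic n) (Dic_gamma_subgroups n))"
    unfolding permuting_pairs_def using fin by (intro card_pairs_off_square) (auto simp: subgroups_Dic n)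
  then show ?thesis by (simp add: card_subgroups_Dic card_Dic_gamma_subgroups n)
qed

lemma permuting_pairs_Dic_gamma_subgroups:
  assumes n: "0 < n"
  shows "permuting_pairs (Dic n) (Dic_gamma_subgroups n)
       = (\<lambda>((d1, d2), (r1, r2)). (Dic_sub_a_gamma n d1 r1, Dic_sub_a_gamma n d2 r2))
           ` Sigma ({d. d dvd n} \<times> {d. d dvd n}) (case_prod residue_pairs_gcd_dvd_double)"
    (is "_ = ?f ` ?S")
proof (intro equalityI subsetI)
  fix z assume "z \<in> permuting_pairs (Dic n) (Dic_gamma_subgroups n)"
  then obtain d1 r1 d2 r2 where z: "z = (Dic_sub_a_gamma n d1 r1, Dic_sub_a_gamma n d2 r2)"
    and d: "d1 dvd n" "r1 < d1" "d2 dvd n" "r2 < d2"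
    and "Dic_sub_a_gamma n d1 r1 <#>\<^bsub>Dic n\<^esub> Dic_sub_a_gamma n d2 r2
       = Dic_sub_a_gamma n d2 r2 <#>\<^bsub>Dic n\<^esub> Dic_sub_a_gamma n d1 r1"
    unfolding permuting_pairs_def Dic_gamma_subgroups_def by auto
  then have "int (gcd d1 d2) dvd 2 * (int r1 - int r2)" using Dic_sub_a_gamma_permute_iff[OF n] by blast
  then show "z \<in> ?f ` ?S"
    unfolding residue_pairs_gcd_dvd_double_def using z d by (intro image_eqI[of _ _ "((d1, d2), (r1, r2))"]) auto
next
  fix z assume "z \<in> ?f ` ?S"
  then obtain d1 r1 d2 r2 where z: "z = (Dic_sub_a_gamma n d1 r1, Dic_sub_a_gamma n d2 r2)"
    and d: "d1 dvd n" "r1 < d1" "d2 dvd n" "r2 < d2" and "int (gcd d1 d2) dvd 2 * (int r1 - int r2)"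
    unfolding residue_pairs_gcd_dvd_double_def by auto
  then have "Dic_sub_a_gamma n d1 r1 <#>\<^bsub>Dic n\<^esub> Dic_sub_a_gamma n d2 r2
       = Dic_sub_a_gamma n d2 r2 <#>\<^bsub>Dic n\<^esub> Dic_sub_a_gamma n d1 r1"
    using Dic_sub_a_gamma_permute_iff[OF n] by blast
  then show "z \<in> permuting_pairs (Dic n) (Dic_gamma_subgroups n)"
    unfolding permuting_pairs_def Dic_gamma_subgroups_def using z d by auto
qed

lemma card_permuting_gamma_pairs:
  assumes n: "0 < n"
  shows "card (permuting_pairs (Dic n) (Dic_gamma_subgroups n)) = even_weighted_lcm_sum n"
proof -
  let ?D = "{d. d dvd n} \<times> {d. d dvd n}" and ?R = "case_prod residue_pairs_gcd_dvd_double"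
  have "inj_on (\<lambda>((d1, d2), (r1, r2)). (Dic_sub_a_gamma n d1 r1, Dic_sub_a_gamma n d2 r2)) (Sigma ?D ?R)"
    using inj_on_Dic_sub_a_gamma[OF n] unfolding residue_pairs_gcd_dvd_double_def inj_on_def by auto
  then have "card (permuting_pairs (Dic n) (Dic_gamma_subgroups n)) = card (Sigma ?D ?R)"
    by (simp add: permuting_pairs_Dic_gamma_subgroups n card_image)
  also have "\<dots> = (\<Sum>p \<in> ?D. card (?R p))"
    using n by (intro card_SigmaI) (auto simp: residue_pairs_gcd_dvd_double_def
        intro: finite_subset[of _ "{..<_} \<times> {..<_}"])
  also have "\<dots> = (\<Sum>(d1, d2) \<in> ?D. (if even d1 \<and> even d2 then 2 else 1) * lcm d1 d2)"
  proof (rule sum.cong[OF refl])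
    fix p assume "p \<in> ?D"
    then obtain d1 d2 where p: "p = (d1, d2)" "d1 dvd n" "d2 dvd n" by auto
    then have "0 < d1" "0 < d2" using n by (auto intro: Nat.gr0I)
    then show "card (?R p) = (case p of (d1, d2) \<Rightarrow> (if even d1 \<and> even d2 then 2 else 1) * lcm d1 d2)"
      unfolding p case_prod_conv by (rule card_residue_pairs_gcd_dvd_double)
  qed
  finally show ?thesis by (simp add: even_weighted_lcm_sum_def sum.cartesian_product)
qed

theorem theorem2p1:
  fixes n m m' :: nat
  assumes "n = 2^m * m'" and "odd m'"
  shows "sd (Dic n) =
    (real (m+2)^2 * real (tau m')^2 + 2 * real (m+2) * real (tau m') * real (sigma n)
      + ((real m - 1) * 2^(m+3) + 9) * gfun m')
    / (real (m+2) * real (tau m') + real (sigma n))^2"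
proof -
  have m': "0 < m'" using assms(2) by (rule odd_pos)
  then have n: "0 < n" using assms(1) by simp
  have "tau (2 * n) = tau (2 ^ Suc m) * tau m'"
    using assms tau_mult[of "2 ^ Suc m" m'] by (simp add: mult.assoc)
  moreover have "tau (2 ^ Suc m) = m + 2" using tau_prime_power[OF two_is_prime_nat, of "Suc m"] by simp
  ultimately have tau: "tau (2 * n) = (m + 2) * tau m'" by simp
  have "even_weighted_lcm_sum n = even_weighted_lcm_sum (2 ^ m) * lcm_sum m'"
    using assms m' by (simp add: even_weighted_lcm_sum_mult_odd)
  then have weight: "real (even_weighted_lcm_sum n) = ((real m - 1) * 2 ^ (m + 3) + 9) * gfun m'"
    by (simp add: even_weighted_lcm_sum_two_power lcm_sum_eq_gfun m')
  have "card (permuting_pairs (Dic n) (subgroups (Dic n))) + sigma n ^ 2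
      = (tau (2 * n) + sigma n) ^ 2 + even_weighted_lcm_sum n"
    using card_permuting_subgroup_pairs_Dic[OF n] by (simp add: card_permuting_gamma_pairs n)
  then have "real (card (permuting_pairs (Dic n) (subgroups (Dic n))))
      = (real (tau (2 * n)) + real (sigma n)) ^ 2 - real (sigma n) ^ 2 + real (even_weighted_lcm_sum n)"
    by (simp add: algebra_simps flip: of_nat_add of_nat_power)
  then show ?thesis
    unfolding sd_def permuting_pairs_def[symmetric] card_subgroups_Dic[OF n] tau weight
    by (simp add: power2_eq_square algebra_simps)
qed

end
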